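(* There is an absolute constant $C>0$ with the following property. Let $m\ge1$ and $\pi\in\mathcal P_{\le2}(m)$, and let $N^2_\pi(m)$ be the number of pairs $(\sigma,\tau)$ of commuting involutions in $\mathrm{Sym}_m$ such that $\sigma$ preserves $\pi$. Then \[ N^2_\pi(m)\le C^m(m!)^{\frac34-\frac{\pi_2}{2m}} . \]
   Context: $\mathcal P_{\le2}(m)$ is the set of set partitions of $\{1,\dots,m\}$ with all blocks of size at most $2$, and $\pi_2$ is the number of blocks of size $2$ of $\pi$. A permutation preserves $\pi$ if it maps blocks of $\pi$ to blocks of $\pi$. Involutions are elements $\sigma$ with $\sigma^2=1$ (the identity included). *)

theory Defs
  imports "HOL-Analysis.Analysis" "HOL-Library.Disjoint_Sets" "HOL-Combinatorics.Permutations"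
begin

definition part_le2 :: "nat \<Rightarrow> nat set set set" where
  "part_le2 m = {P. partition_on {1..m} P \<and> (\<forall>B\<in>P. card B \<le> 2)}"

definition blocks2 :: "nat set set \<Rightarrow> nat" where
  "blocks2 P = card {B\<in>P. card B = 2}"

definition involution :: "(nat \<Rightarrow> nat) \<Rightarrow> bool" where
  "involution \<sigma> \<longleftrightarrow> \<sigma> \<circ> \<sigma> = id"

definition preserves :: "(nat \<Rightarrow> nat) \<Rightarrow> nat set set \<Rightarrow> bool" where
  "preserves \<sigma> P \<longleftrightarrow> (\<forall>B\<in>P. \<sigma> ` B \<in> P)"

definition N2 :: "nat \<Rightarrow> nat set set \<Rightarrow> nat" where
  "N2 m P = card {(\<sigma>, \<tau>). \<sigma> permutes {1..m} \<and> \<tau> permutes {1..m} \<and>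
      involution \<sigma> \<and> involution \<tau> \<and> \<sigma> \<circ> \<tau> = \<tau> \<circ> \<sigma> \<and> preserves \<sigma> P}"

end

theory Submission
  imports Defs
begin

(* An involution t commuting with an involution u is determined by its code relative to u:
   points with t i = i or t i = u i get the labels 1 and 2, the least point of every other
   orbit of the group generated by u and t records t i, and all remaining points get 0.
   Let p be the involution whose 2-cycles are the 2-blocks of pi. A sigma preserving pi
   commutes with p, so (sigma, tau) is encoded by the codes of sigma relative to p and of
   tau relative to sigma. Since these orbits have 2 or 4 points, at most (3m - 2 pi_2)/4 of
   the 2m labels record a value. Weighting the m + 1 possible recorded values by 1/m and the
   cheap labels by 1, all label vectors together weigh at most 25^m, while every encoded pair
   weighs at least m^(-(3m - 2 pi_2)/4). Hence N <= 25^m m^((3m - 2 pi_2)/4), and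
   m^m <= e^m m! turns this into the stated bound with C = 25 e. *)

lemma card_filter_add_card_filter_not:
  "finite A \<Longrightarrow> card {x\<in>A. P x} + card {x\<in>A. \<not> P x} = card A"
  using card_Int_Diff[of A "Collect P"] by (simp add: Int_def set_diff_eq)

lemma card_mult_le_card_if_disjoint_subsets:
  assumes "finite X" "finite A" "\<And>a. a \<in> A \<Longrightarrow> B a \<subseteq> X" "\<And>a. a \<in> A \<Longrightarrow> card (B a) = k"
    and "\<And>a b. a \<in> A \<Longrightarrow> b \<in> A \<Longrightarrow> a \<noteq> b \<Longrightarrow> B a \<inter> B b = {}"
  shows "k * card A \<le> card X"
proof -
  have "k * card A = card (\<Union>(B ` A))"
    using assms by (subst card_UN_disjoint) (auto intro: finite_subset)
  also have "\<dots> \<le> card X"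
    using assms by (intro card_mono) auto
  finally show ?thesis .
qed

lemma card_mult_le_sum_weight_power:
  fixes enc :: "'a \<Rightarrow> 'i \<Rightarrow> 'v" and w :: "'v \<Rightarrow> real"
  assumes "finite I" "finite V" "inj_on enc A" "enc ` A \<subseteq> PiE I (\<lambda>_. V)"
    and "\<And>v. v \<in> V \<Longrightarrow> 0 \<le> w v" "\<And>a. a \<in> A \<Longrightarrow> \<delta> \<le> (\<Prod>i\<in>I. w (enc a i))"
  shows "real (card A) * \<delta> \<le> (\<Sum>v\<in>V. w v) ^ card I"
proof -
  have fin: "finite (PiE I (\<lambda>_. V))"
    using assms(1,2) by (simp add: finite_PiE)
  then have "finite A"
    using assms(3,4) finite_imageD finite_subset by blast
  then have "real (card A) * \<delta> = (\<Sum>a\<in>A. \<delta>)" by simp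
  also have "\<dots> \<le> (\<Sum>a\<in>A. \<Prod>i\<in>I. w (enc a i))"
    by (rule sum_mono) (rule assms(6))
  also have "\<dots> = (\<Sum>h\<in>enc ` A. \<Prod>i\<in>I. w (h i))"
    by (simp add: sum.reindex[OF assms(3)])
  also have "\<dots> \<le> (\<Sum>h\<in>PiE I (\<lambda>_. V). \<Prod>i\<in>I. w (h i))"
    using assms(5) by (intro sum_mono2[OF fin assms(4)] prod_nonneg) (auto simp: PiE_iff)
  also have "\<dots> = (\<Prod>i\<in>I. \<Sum>v\<in>V. w v)"
    using prod_sum_PiE[of I "\<lambda>_. V" "\<lambda>_ v. w v"] assms(1,2) by simp
  also have "\<dots> = (\<Sum>v\<in>V. w v) ^ card I" by simp
  finally show ?thesis .
qed

definition joint_orbit :: "(nat \<Rightarrow> nat) \<Rightarrow> (nat \<Rightarrow> nat) \<Rightarrow> nat \<Rightarrow> nat set" where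
  "joint_orbit u t i = {i, t i, u i, u (t i)}"

(* A point coded 0 is recovered from the least point of its orbit, whose code is never 0. *)
definition orbit_code :: "(nat \<Rightarrow> nat) \<Rightarrow> (nat \<Rightarrow> nat) \<Rightarrow> nat \<Rightarrow> nat" where
  "orbit_code u t i =
     (if t i = i then 1
      else if t i = u i then 2
      else if (\<forall>j \<in> joint_orbit u t i. i \<le> j) then t i + 3
      else 0)"

lemma orbit_code_eq_imp_eq:
  "orbit_code u t i = orbit_code u t' i \<Longrightarrow> orbit_code u t i \<noteq> 0 \<Longrightarrow> t i = t' i"
  unfolding orbit_code_def by (auto split: if_splits)

lemma orbit_code_le: "orbit_code u t i \<le> t i + 3"
  unfolding orbit_code_def by simp

lemma orbit_code_ge_3_iff:
  "3 \<le> orbit_code u t i \<longleftrightarrow> t i \<noteq> i \<and> t i \<noteq> u i \<and> (\<forall>j \<in> joint_orbit u t i. i \<le> j)"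
  unfolding orbit_code_def by auto

lemma joint_orbit_subset:
  "u permutes I \<Longrightarrow> t permutes I \<Longrightarrow> i \<in> I \<Longrightarrow> joint_orbit u t i \<subseteq> I"
  unfolding joint_orbit_def by (auto simp: permutes_in_image)

locale commuting_involutions =
  fixes u t :: "nat \<Rightarrow> nat"
  assumes involution_u: "involution u" and involution_t: "involution t"
    and commute: "t \<circ> u = u \<circ> t"
begin

lemma u_u [simp]: "u (u x) = x" and t_t [simp]: "t (t x) = x" and t_u: "t (u x) = u (t x)"
  using involution_u involution_t commute by (simp_all add: involution_def fun_eq_iff)

lemma joint_orbit_eq: "x \<in> joint_orbit u t i \<Longrightarrow> joint_orbit u t x = joint_orbit u t i"
  unfolding joint_orbit_def by (auto simp: t_u)

lemma joint_orbit_fixed_iff: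
  assumes "x \<in> joint_orbit u t i"
  shows "u x = x \<longleftrightarrow> u i = i" and "t x = x \<longleftrightarrow> t i = i"
  using assms unfolding joint_orbit_def by (auto simp: t_u) (metis t_t t_u u_u)+

lemma card_joint_orbit:
  assumes "t i \<noteq> i" "t i \<noteq> u i"
  shows "card (joint_orbit u t i) = (if u i = i then 2 else 4)"
proof (cases "u i = i")
  case True
  then have "joint_orbit u t i = {i, t i}"
    unfolding joint_orbit_def by (metis insert_absorb2 insert_commute t_u)
  then show ?thesis using True assms(1) by simp
next
  case False
  have "u (t i) \<noteq> t i" "u (t i) \<noteq> i" "u (t i) \<noteq> u i"
    using False assms by (metis t_t t_u, metis u_u, metis u_u)
  then show ?thesis using False assms unfolding joint_orbit_def by auto
qed

lemma joint_orbits_disjoint: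
  assumes "3 \<le> orbit_code u t i" "3 \<le> orbit_code u t j" "i \<noteq> j"
  shows "joint_orbit u t i \<inter> joint_orbit u t j = {}"
proof (rule ccontr)
  assume "joint_orbit u t i \<inter> joint_orbit u t j \<noteq> {}"
  then obtain x where "x \<in> joint_orbit u t i" "x \<in> joint_orbit u t j" by blast
  then have same: "joint_orbit u t i = joint_orbit u t j" using joint_orbit_eq by metis
  have "i \<in> joint_orbit u t i" "j \<in> joint_orbit u t j" unfolding joint_orbit_def by simp_all
  then have "j \<le> i" "i \<le> j" using assms(1,2) same unfolding orbit_code_ge_3_iff by auto
  then show False using assms(3) by simp
qed

lemma card_orbit_code_ge_3_le:
  assumes "finite I" "u permutes I" "t permutes I"
  shows "4 * card {i\<in>I. 3 \<le> orbit_code u t i}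
    \<le> 2 * card {i\<in>I. u i = i \<and> t i \<noteq> i} + card {i\<in>I. u i \<noteq> i \<and> t i \<noteq> i}"
proof -
  let ?E = "\<lambda>b. {i\<in>I. 3 \<le> orbit_code u t i \<and> (u i = i) = b}"
  have orbit_in: "joint_orbit u t i \<subseteq> {x\<in>I. (u x = x) = b \<and> t x \<noteq> x}" if "i \<in> ?E b" for i b
    using that joint_orbit_subset[OF assms(2,3)] joint_orbit_fixed_iff
    unfolding orbit_code_ge_3_iff by blast
  have card_E: "(if b then 2 else 4) * card (?E b) \<le> card {x\<in>I. (u x = x) = b \<and> t x \<noteq> x}" for b
  proof (rule card_mult_le_card_if_disjoint_subsets[where B = "joint_orbit u t"])
    fix i j assume "i \<in> ?E b" "j \<in> ?E b"
    then show "joint_orbit u t i \<subseteq> {x\<in>I. (u x = x) = b \<and> t x \<noteq> x}"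
      and "card (joint_orbit u t i) = (if b then 2 else 4)"
      and "i \<noteq> j \<Longrightarrow> joint_orbit u t i \<inter> joint_orbit u t j = {}"
      using orbit_in card_joint_orbit joint_orbits_disjoint by (auto simp: orbit_code_ge_3_iff)
  qed (use assms(1) in simp_all)
  have "{i\<in>I. 3 \<le> orbit_code u t i} = ?E True \<union> ?E False" by auto
  then have "card {i\<in>I. 3 \<le> orbit_code u t i} = card (?E True) + card (?E False)"
    using assms(1) by (simp add: card_Un_disjoint disjoint_iff)
  then show ?thesis
    using card_E[of True] card_E[of False] by simp
qed

end

lemma card_orbit_code_ge_3_chain_le:
  assumes "finite I" "p permutes I" "s permutes I" "t permutes I"
    and "commuting_involutions p s" "commuting_involutions s t"
  shows "4 * (card {i\<in>I. 3 \<le> orbit_code p s i} + card {i\<in>I. 3 \<le> orbit_code s t i})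
    \<le> 2 * card I + card {i\<in>I. p i = i}"
proof -
  let ?x = "card {i\<in>I. p i = i \<and> s i \<noteq> i}" and ?y = "card {i\<in>I. p i \<noteq> i \<and> s i \<noteq> i}"
  let ?F = "card {i\<in>I. s i = i}" and ?N = "card {i\<in>I. s i \<noteq> i}"
  have a: "4 * card {i\<in>I. 3 \<le> orbit_code p s i} \<le> 2 * ?x + ?y"
    using commuting_involutions.card_orbit_code_ge_3_le[OF assms(5,1,2,3)] .
  have "4 * card {i\<in>I. 3 \<le> orbit_code s t i}
      \<le> 2 * card {i\<in>I. s i = i \<and> t i \<noteq> i} + card {i\<in>I. s i \<noteq> i \<and> t i \<noteq> i}"
    using commuting_involutions.card_orbit_code_ge_3_le[OF assms(6,1,3,4)] .
  also have "\<dots> \<le> 2 * ?F + ?N"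
    using assms(1) by (intro add_mono mult_le_mono2 card_mono) auto
  finally have b: "4 * card {i\<in>I. 3 \<le> orbit_code s t i} \<le> 2 * ?F + ?N" .
  have "?x + ?y = ?N"
    using card_filter_add_card_filter_not[of "{i\<in>I. s i \<noteq> i}" "\<lambda>i. p i = i"] assms(1)
    by (simp add: conj_commute conj_left_commute)
  moreover have "?F + ?N = card I"
    using card_filter_add_card_filter_not[OF assms(1)] .
  moreover have "?x \<le> card {i\<in>I. p i = i}"
    using assms(1) by (intro card_mono) auto
  ultimately show ?thesis using a b by (simp add: add_mult_distrib2)
qed

lemma orbit_code_inj:
  assumes "commuting_involutions u t" "commuting_involutions u t'"
    and "orbit_code u t = orbit_code u t'"
  shows "t = t'"
proof
  fix i
  interpret t: commuting_involutions u t by fact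
  interpret t': commuting_involutions u t' by fact
  have agree_t: "t (t x) = t' (t x)" and agree_u: "t (u x) = t' (u x)" if "t x = t' x" for x
    using that by (metis t.t_t t'.t_t, metis t.t_u t'.t_u)
  define c where "c = Min (joint_orbit u t i)"
  have "finite (joint_orbit u t i)" unfolding joint_orbit_def by simp
  then have c: "c \<in> joint_orbit u t i" "\<forall>j \<in> joint_orbit u t i. c \<le> j"
    unfolding c_def by (auto intro: Min_in simp: joint_orbit_def)
  then have orbit_c: "joint_orbit u t c = joint_orbit u t i"
    using t.joint_orbit_eq by blast
  have "orbit_code u t c \<noteq> 0"
    using c(2) unfolding orbit_c[symmetric] orbit_code_def by simp
  then have "t c = t' c"
    using assms(3) orbit_code_eq_imp_eq by metis
  moreover have "i \<in> {c, t c, u c, u (t c)}"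
    using orbit_c unfolding joint_orbit_def by auto
  ultimately show "t i = t' i"
    using agree_t agree_u t.t_u by auto
qed

lemma orbit_code_inj_on:
  assumes "commuting_involutions u t" "commuting_involutions u t'"
    and "t permutes I" "t' permutes I" "\<And>i. i \<in> I \<Longrightarrow> orbit_code u t i = orbit_code u t' i"
  shows "t = t'"
proof (rule orbit_code_inj[OF assms(1,2)])
  show "orbit_code u t = orbit_code u t'"
  proof
    fix i show "orbit_code u t i = orbit_code u t' i"
    proof (cases "i \<in> I")
      case False
      then have "t i = i" "t' i = i" using assms(3,4) by (simp_all add: permutes_not_in)
      then show ?thesis by (simp add: orbit_code_def)
    qed (rule assms(5))
  qed
qed

(* As {i, i} = {i}, the fixed points of partner P are exactly the points of singleton blocks. *)
definition partner :: "nat set set \<Rightarrow> nat \<Rightarrow> nat" where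
  "partner P i = (if i \<in> \<Union>P then THE j. {i, j} \<in> P else i)"

definition pair_code :: "nat \<Rightarrow> nat set set \<Rightarrow> (nat \<Rightarrow> nat) \<times> (nat \<Rightarrow> nat) \<Rightarrow> nat \<Rightarrow> nat \<times> nat" where
  "pair_code m P = (\<lambda>(s, t). \<lambda>i\<in>{1..m}. (orbit_code (partner P) s i, orbit_code s t i))"

lemma pair_code_in_PiE:
  assumes "s permutes {1..m}" "t permutes {1..m}"
  shows "pair_code m P (s, t) \<in> PiE {1..m} (\<lambda>_. {..m + 3} \<times> {..m + 3})"
proof -
  have "s i \<le> m" "t i \<le> m" if "i \<in> {1..m}" for i
    using assms permutes_in_image that by fastforce+
  then show ?thesis
    unfolding pair_code_def by (force intro: order_trans[OF orbit_code_le])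
qed

definition code_weight :: "nat \<Rightarrow> nat \<Rightarrow> real" where
  "code_weight m v = (if v < 3 then 1 else 1 / real m)"

definition pair_weight :: "nat \<Rightarrow> nat \<times> nat \<Rightarrow> real" where
  "pair_weight m = (\<lambda>(a, b). code_weight m a * code_weight m b)"

lemma pair_weight_nonneg: "0 \<le> pair_weight m c"
  unfolding pair_weight_def code_weight_def by (simp split: prod.split)

lemma prod_code_weight:
  "finite I \<Longrightarrow> (\<Prod>i\<in>I. code_weight m (f i)) = (1 / real m) ^ card {i\<in>I. 3 \<le> f i}"
  unfolding code_weight_def by (simp add: prod.If_cases not_less Int_def)

lemma sum_pair_weight_le:
  assumes "1 \<le> m"
  shows "(\<Sum>c\<in>{..m + 3} \<times> {..m + 3}. pair_weight m c) \<le> 25"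
proof -
  have "{..m + 3} \<inter> {v. v < 3} = {..<3}" "{..m + 3} \<inter> - {v. v < 3} = {3..m + 3}" by auto
  then have "(\<Sum>v\<le>m + 3. code_weight m v) = 3 + real (m + 1) / real m"
    unfolding code_weight_def by (simp add: sum.If_cases)
  also have "\<dots> \<le> 5" using assms by (simp add: field_simps)
  finally have "(\<Sum>v\<le>m + 3. code_weight m v) ^ 2 \<le> 5 ^ 2"
    by (intro power_mono) (auto simp: code_weight_def intro: sum_nonneg)
  then show ?thesis
    unfolding pair_weight_def by (simp add: sum_product sum.cartesian_product power2_eq_square)
qed

context
  fixes m :: nat and P :: "nat set set"
  assumes P: "P \<in> part_le2 m"
begin

lemma part_le2_partition: "partition_on {1..m} P"
  using P by (simp add: part_le2_def)

lemma part_le2_block_eq: "B \<in> P \<Longrightarrow> B' \<in> P \<Longrightarrow> i \<in> B \<Longrightarrow> i \<in> B' \<Longrightarrow> B = B'"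
  using disjointD[OF partition_onD2[OF part_le2_partition]] by blast

lemma partner_eqI: "{i, j} \<in> P \<Longrightarrow> partner P i = j"
proof -
  assume ij: "{i, j} \<in> P"
  have "(THE j. {i, j} \<in> P) = j"
  proof (rule the_equality)
    fix j' assume "{i, j'} \<in> P"
    then have "{i, j'} = {i, j}"
      using ij part_le2_block_eq by blast
    then show "j' = j" by (auto simp: doubleton_eq_iff)
  qed (rule ij)
  then show ?thesis using ij unfolding partner_def by auto
qed

lemma partner_block: "i \<in> {1..m} \<Longrightarrow> {i, partner P i} \<in> P"
proof -
  assume "i \<in> {1..m}"
  then obtain B where B: "B \<in> P" "i \<in> B"
    using partition_onD1[OF part_le2_partition] by blast
  have "finite B" "B \<noteq> {}" "card B \<le> 2"
    using B P partition_onD1[OF part_le2_partition] partition_onD3[OF part_le2_partition]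
    unfolding part_le2_def by (auto intro: finite_subset)
  then obtain j where "B = {i, j}"
    using B(2) by (auto simp: le_Suc_eq numeral_2_eq_2 card_Suc_eq)
  then show ?thesis using B(1) partner_eqI by simp
qed

lemma partner_outside: "i \<notin> {1..m} \<Longrightarrow> partner P i = i"
  using partition_onD1[OF part_le2_partition] unfolding partner_def by auto

lemma partner_partner: "partner P (partner P i) = i"
proof (cases "i \<in> {1..m}")
  case True
  then have "{partner P i, i} \<in> P" using partner_block by (simp add: insert_commute)
  then show ?thesis by (rule partner_eqI)
qed (simp add: partner_outside)

lemma involution_partner: "involution (partner P)"
  unfolding involution_def by (simp add: fun_eq_iff partner_partner)

lemma partner_permutes: "partner P permutes {1..m}"
  unfolding permutes_def by (metis partner_outside partner_partner)

lemma commuting_involutions_partner: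
  assumes "s permutes {1..m}" "involution s" "preserves s P"
  shows "commuting_involutions (partner P) s"
proof
  show "s \<circ> partner P = partner P \<circ> s"
  proof
    fix i show "(s \<circ> partner P) i = (partner P \<circ> s) i"
    proof (cases "i \<in> {1..m}")
      case True
      then have "s ` {i, partner P i} \<in> P"
        using assms(3) partner_block unfolding preserves_def by blast
      then show ?thesis using partner_eqI by simp
    qed (simp add: partner_outside permutes_not_in[OF assms(1)])
  qed
qed (fact involution_partner assms(2))+

lemma card_partner_moved: "card {i\<in>{1..m}. partner P i \<noteq> i} = 2 * blocks2 P"
proof -
  have moved: "{i\<in>{1..m}. partner P i \<noteq> i} = \<Union>{B\<in>P. card B = 2}"
  proof (intro equalityI subsetI)
    fix i assume "i \<in> {i\<in>{1..m}. partner P i \<noteq> i}"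
    then show "i \<in> \<Union>{B\<in>P. card B = 2}"
      using partner_block[of i] by (intro UnionI[of "{i, partner P i}"]) auto
  next
    fix i assume "i \<in> \<Union>{B\<in>P. card B = 2}"
    then obtain B where B: "B \<in> P" "card B = 2" "i \<in> B" by blast
    then obtain j where "B = {i, j}" "j \<noteq> i"
      by (auto simp: card_2_iff)
    then show "i \<in> {i\<in>{1..m}. partner P i \<noteq> i}"
      using B partner_eqI partition_onD1[OF part_le2_partition] by auto
  qed
  have "card (\<Union>{B\<in>P. card B = 2}) = (\<Sum>B\<in>{B\<in>P. card B = 2}. card B)"
    using partition_onD2[OF part_le2_partition]
    by (intro card_Union_disjoint) (auto simp: disjoint_def pairwise_def disjnt_def card_ge_0_finite)
  then show ?thesis
    unfolding moved blocks2_def by simp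
qed

lemma double_blocks2_le: "2 * blocks2 P \<le> m"
proof -
  have "card {i\<in>{1..m}. partner P i \<noteq> i} \<le> card {1..m}"
    by (intro card_mono) auto
  then show ?thesis using card_partner_moved by simp
qed

lemma card_orbit_code_ge_3_partner_le:
  assumes "s permutes {1..m}" "t permutes {1..m}"
    and "commuting_involutions (partner P) s" "commuting_involutions s t"
  shows "4 * (card {i\<in>{1..m}. 3 \<le> orbit_code (partner P) s i} + card {i\<in>{1..m}. 3 \<le> orbit_code s t i})
    + 2 * blocks2 P \<le> 3 * m"
proof -
  have "card {i\<in>{1..m}. partner P i = i} + 2 * blocks2 P = m"
    using card_filter_add_card_filter_not[of "{1..m}" "\<lambda>i. partner P i = i"] card_partner_moved
    by simp
  then show ?thesis
    using card_orbit_code_ge_3_chain_le[OF _ partner_permutes assms] by simp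
qed

lemma inj_on_pair_code:
  "inj_on (pair_code m P) {(s, t). s permutes {1..m} \<and> t permutes {1..m} \<and>
     commuting_involutions (partner P) s \<and> commuting_involutions s t}"
proof (rule inj_onI, clarify)
  fix s t s' t'
  assume s: "s permutes {1..m}" "commuting_involutions (partner P) s"
    and t: "t permutes {1..m}" "commuting_involutions s t"
    and s': "s' permutes {1..m}" "commuting_involutions (partner P) s'"
    and t': "t' permutes {1..m}" "commuting_involutions s' t'"
    and codes: "pair_code m P (s, t) = pair_code m P (s', t')"
  have codes_s: "orbit_code (partner P) s i = orbit_code (partner P) s' i"
    and codes_t: "orbit_code s t i = orbit_code s' t' i" if "i \<in> {1..m}" for i
    using codes that unfolding pair_code_def by (auto dest!: fun_cong[where x = i])
  have "s = s'"
    by (rule orbit_code_inj_on[OF s(2) s'(2) s(1) s'(1) codes_s])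
  moreover have "t = t'"
    using t'(2) codes_t unfolding \<open>s = s'\<close>[symmetric]
    by (rule orbit_code_inj_on[OF t(2) _ t(1) t'(1)])
  ultimately show "s = s' \<and> t = t'" ..
qed

lemma prod_pair_weight_ge:
  assumes "1 \<le> m" "s permutes {1..m}" "t permutes {1..m}"
    and "commuting_involutions (partner P) s" "commuting_involutions s t"
  shows "real m powr (- ((3 * real m - 2 * real (blocks2 P)) / 4))
    \<le> (\<Prod>i\<in>{1..m}. pair_weight m (pair_code m P (s, t) i))"
proof -
  let ?a = "card {i\<in>{1..m}. 3 \<le> orbit_code (partner P) s i}"
    and ?b = "card {i\<in>{1..m}. 3 \<le> orbit_code s t i}"
  have "4 * (?a + ?b) + 2 * blocks2 P \<le> 3 * m"
    using card_orbit_code_ge_3_partner_le[OF assms(2-)] .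
  then have "real (4 * (?a + ?b) + 2 * blocks2 P) \<le> real (3 * m)"
    by (simp only: of_nat_le_iff)
  then have "real m powr (- ((3 * real m - 2 * real (blocks2 P)) / 4)) \<le> real m powr (- real (?a + ?b))"
    using assms(1) by (intro powr_mono) (simp_all add: field_simps)
  also have "\<dots> = (1 / real m) ^ (?a + ?b)"
    using assms(1) by (subst powr_minus, subst powr_realpow) (simp_all add: power_one_over inverse_eq_divide)
  also have "\<dots> = (\<Prod>i\<in>{1..m}. pair_weight m (pair_code m P (s, t) i))"
    unfolding pair_code_def pair_weight_def by (simp add: prod.distrib prod_code_weight power_add)
  finally show ?thesis .
qed

end

lemma N2_le:
  assumes "1 \<le> m" "P \<in> part_le2 m"
  shows "real (N2 m P) \<le> 25 ^ m * real m powr ((3 * real m - 2 * real (blocks2 P)) / 4)"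
proof -
  define Pairs where "Pairs = {(\<sigma>, \<tau>). \<sigma> permutes {1..m} \<and> \<tau> permutes {1..m} \<and>
      involution \<sigma> \<and> involution \<tau> \<and> \<sigma> \<circ> \<tau> = \<tau> \<circ> \<sigma> \<and> preserves \<sigma> P}"
  define L where "L = (3 * real m - 2 * real (blocks2 P)) / 4"
  have Pairs_sub: "Pairs \<subseteq> {(s, t). s permutes {1..m} \<and> t permutes {1..m} \<and>
      commuting_involutions (partner P) s \<and> commuting_involutions s t}"
    using commuting_involutions_partner[OF assms(2)] unfolding Pairs_def
    by (auto simp: commuting_involutions_def)
  have "real (card Pairs) * real m powr (- L)
      \<le> (\<Sum>c\<in>{..m + 3} \<times> {..m + 3}. pair_weight m c) ^ card {1..m}"
  proof (rule card_mult_le_sum_weight_power)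
    show "inj_on (pair_code m P) Pairs"
      using inj_on_subset[OF inj_on_pair_code[OF assms(2)] Pairs_sub] .
    show "pair_code m P ` Pairs \<subseteq> PiE {1..m} (\<lambda>_. {..m + 3} \<times> {..m + 3})"
    proof (rule image_subsetI)
      fix p assume "p \<in> Pairs"
      then obtain s t where "p = (s, t)" "s permutes {1..m}" "t permutes {1..m}"
        using Pairs_sub by blast
      then show "pair_code m P p \<in> PiE {1..m} (\<lambda>_. {..m + 3} \<times> {..m + 3})"
        using pair_code_in_PiE by blast
    qed
    show "real m powr (- L) \<le> (\<Prod>i\<in>{1..m}. pair_weight m (pair_code m P p i))"
      if p_in: "p \<in> Pairs" for p
    proof -
      obtain s t where "p = (s, t)" "s permutes {1..m}" "t permutes {1..m}"
        "commuting_involutions (partner P) s" "commuting_involutions s t"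
        using p_in Pairs_sub by blast
      then show ?thesis
        unfolding L_def using prod_pair_weight_ge[OF assms(2,1)] by simp
    qed
  qed (simp_all add: pair_weight_nonneg)
  also have "\<dots> \<le> 25 ^ m"
    unfolding card_atLeastAtMost diff_Suc_1 using sum_pair_weight_le[OF assms(1)]
    by (intro power_mono) (simp_all add: sum_nonneg pair_weight_nonneg)
  finally have "real (card Pairs) * real m powr (- L) \<le> 25 ^ m" .
  then show ?thesis
    using assms(1) unfolding N2_def Pairs_def[symmetric] L_def[symmetric]
    by (simp add: powr_minus divide_inverse[symmetric] pos_divide_le_eq)
qed

lemma pow_le_exp_mult_fact: "real n ^ n \<le> exp (real n) * fact n"
proof -
  have "real n ^ n / fact n = (\<Sum>k\<in>{n}. real n ^ k /\<^sub>R fact k)"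
    by (simp add: divide_inverse mult.commute)
  also have "\<dots> \<le> (\<Sum>k. real n ^ k /\<^sub>R fact k)"
    using summable_exp[of "real n"] by (intro sum_le_suminf) auto
  also have "\<dots> = exp (real n)"
    using exp_converges sums_unique by metis
  finally show ?thesis by (simp add: divide_le_eq)
qed

lemma powr_le_exp_pow_mult_fact_powr:
  assumes "1 \<le> n" "0 \<le> L" "L \<le> real n"
  shows "real n powr L \<le> exp 1 ^ n * fact n powr (L / real n)"
proof -
  have "real n powr L = (real n ^ n) powr (L / real n)"
    using assms(1) by (simp add: powr_realpow[symmetric] powr_powr)
  also have "\<dots> \<le> (exp (real n) * fact n) powr (L / real n)"
    using assms pow_le_exp_mult_fact by (intro powr_mono2) auto
  also have "\<dots> = exp L * fact n powr (L / real n)"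
    using assms(1) by (simp add: powr_mult exp_powr_real)
  also have "exp L \<le> exp 1 ^ n"
    using assms(3) by (simp flip: exp_of_nat_mult)
  finally show ?thesis by simp
qed

theorem lemma5p3:
  shows "\<exists>C::real. C > 0 \<and> (\<forall>m::nat. \<forall>P. m \<ge> 1 \<longrightarrow> P \<in> part_le2 m \<longrightarrow>
     real (N2 m P) \<le> C ^ m * (fact m) powr (3/4 - real (blocks2 P) / (2 * real m)))"
proof (intro exI[of _ "25 * exp 1"] conjI allI impI)
  fix m :: nat and P assume m: "m \<ge> 1" and P: "P \<in> part_le2 m"
  define L where "L = (3 * real m - 2 * real (blocks2 P)) / 4"
  have L: "0 \<le> L" "L \<le> real m"
    using double_blocks2_le[OF P] unfolding L_def by (simp_all add: field_simps)
  have L_div: "L / real m = 3/4 - real (blocks2 P) / (2 * real m)"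
    using m unfolding L_def by (simp add: field_simps)
  have "real (N2 m P) \<le> 25 ^ m * real m powr L"
    using N2_le[OF m P] by (simp add: L_def)
  also have "\<dots> \<le> 25 ^ m * (exp 1 ^ m * fact m powr (L / real m))"
    using powr_le_exp_pow_mult_fact_powr[OF m L] by simp
  also have "\<dots> = (25 * exp 1) ^ m * fact m powr (L / real m)"
    by (simp add: power_mult_distrib)
  finally show "real (N2 m P) \<le> (25 * exp 1) ^ m * fact m powr (3/4 - real (blocks2 P) / (2 * real m))"
    unfolding L_div[symmetric] .
qed simp

end
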